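(* Let $k\ge 2$ and consider the Maker–Breaker $k$-in-a-row game on the infinite grid $\mathbb Z^2$: the vertex set is $\mathbb Z^2$ and the edges are all sets of $k$ consecutive points on a horizontal, vertical, or diagonal (slope $1$ or $-1$) line, i.e. all sets $\{p+tv: 0\le t\le k-1\}$ with $p\in\mathbb Z^2$ and $v\in\{(1,0),(0,1),(1,1),(1,-1)\}$. If Breaker has a winning pairing strategy for this game, then $k\ge 9$.
   Context: A winning pairing strategy for Breaker on a hypergraph $(V,E)$ is a family of pairwise disjoint 2-element subsets of $V$ such that every edge of $E$ contains at least one of these pairs. *)

theory Defs
  imports Main
begin

definition winning_pairing_strategy :: "'a set \<Rightarrow> 'a set set \<Rightarrow> 'a set set \<Rightarrow> bool" where
  "winning_pairing_strategy V E P \<longleftrightarrow>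
     (\<forall>p\<in>P. p \<subseteq> V \<and> card p = 2) \<and>
     (\<forall>p\<in>P. \<forall>q\<in>P. p \<noteq> q \<longrightarrow> p \<inter> q = {}) \<and>
     (\<forall>e\<in>E. \<exists>p\<in>P. p \<subseteq> e)"

definition breaker_has_pairing_strategy :: "'a set \<Rightarrow> 'a set set \<Rightarrow> bool" where
  "breaker_has_pairing_strategy V E \<longleftrightarrow> (\<exists>P. winning_pairing_strategy V E P)"

definition kdirs :: "(int \<times> int) set" where
  "kdirs = {(1,0), (0,1), (1,1), (1,-1)}"

definition k_in_a_row_edges :: "nat \<Rightarrow> (int \<times> int) set set" where
  "k_in_a_row_edges k =
     {{(fst p + t * fst v, snd p + t * snd v) | t. 0 \<le> t \<and> t \<le> int k - 1} | p v. v \<in> kdirs}"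

end

theory Submission
  imports Defs
begin

text \<open>Double counting on a box. Let \<open>B\<close> be an \<open>N \<times> N\<close> box; the segments of length \<open>k\<close> starting
in \<open>B\<close> number \<open>4N\<^sup>2\<close> and all lie in the enlarged box \<open>C\<close> of side \<open>N + 2k\<close>. Each of them
contains a pair of the strategy, necessarily a pair inside \<open>C\<close>, and there are at most
\<open>(N + 2k)\<^sup>2 / 2\<close> disjoint pairs in \<open>C\<close>. A fixed pair, on the other hand, lies in at most \<open>k - 1\<close>
segments: the two points determine the direction and the offset between their positions
on the segment, and a shift of \<open>k\<close> positions by a nonzero offset stays inside them at most
\<open>k - 1\<close> times. Hence \<open>8N\<^sup>2 \<le> (k - 1)(N + 2k)\<^sup>2\<close> for all \<open>N\<close>, which fails for \<open>k \<le> 8\<close>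
and \<open>N = 300\<close>.\<close>

definition segment :: "nat \<Rightarrow> int \<times> int \<Rightarrow> int \<times> int \<Rightarrow> (int \<times> int) set" where
  "segment k p v = {(fst p + t * fst v, snd p + t * snd v) | t. 0 \<le> t \<and> t \<le> int k - 1}"

lemma segment_in_k_in_a_row_edges: "v \<in> kdirs \<Longrightarrow> segment k p v \<in> k_in_a_row_edges k"
  unfolding segment_def k_in_a_row_edges_def by blast

lemma kdirs_parallel_eq:
  fixes s u :: int
  assumes "v \<in> kdirs" "w \<in> kdirs" "s \<noteq> 0"
    and "s * fst v = u * fst w" "s * snd v = u * snd w"
  shows "v = w \<and> u = s"
  using assms unfolding kdirs_def by auto

lemma finite_kdirs: "finite kdirs"
  unfolding kdirs_def by simp

lemma card_kdirs: "card kdirs = 4"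
  unfolding kdirs_def by simp

lemma segment_subset_square:
  assumes "v \<in> kdirs"
  shows "segment k p v \<subseteq> {fst p - int k..fst p + int k} \<times> {snd p - int k..snd p + int k}"
  using assms unfolding segment_def kdirs_def by auto

lemma card_overlap_shift:
  fixes s :: int
  assumes "s \<noteq> 0"
  shows "card {t. 0 \<le> t \<and> t \<le> int k - 1 \<and> 0 \<le> t + s \<and> t + s \<le> int k - 1} \<le> k - 1"
    (is "card ?T \<le> _")
proof (cases "s > 0")
  case True
  then have "?T \<subseteq> {0..int k - 2}" by auto
  then have "card ?T \<le> card {0..int k - 2}" by (intro card_mono) auto
  then show ?thesis by simp
next
  case False
  with assms have "?T \<subseteq> {1..int k - 1}" by auto
  then have "card ?T \<le> card {1..int k - 1}" by (intro card_mono) auto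
  then show ?thesis by simp
qed

lemma segments_through_pair:
  assumes "card q = 2"
  shows "finite {(p, v). v \<in> kdirs \<and> q \<subseteq> segment k p v}"
    and "card {(p, v). v \<in> kdirs \<and> q \<subseteq> segment k p v} \<le> k - 1"
proof -
  let ?S = "{(p, v). v \<in> kdirs \<and> q \<subseteq> segment k p v}"
  have "finite ?S \<and> card ?S \<le> k - 1"
  proof (cases "?S = {}")
    case False
    then obtain p0 v0 where v0: "v0 \<in> kdirs" and q0: "q \<subseteq> segment k p0 v0" by blast
    from assms obtain a b where qab: "q = {a, b}" and "a \<noteq> b" by (meson card_2_iff)
    with q0 obtain t1 t2 where
      a0: "a = (fst p0 + t1 * fst v0, snd p0 + t1 * snd v0)" and
      b0: "b = (fst p0 + t2 * fst v0, snd p0 + t2 * snd v0)"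
      unfolding segment_def by blast
    define s where "s = t2 - t1"
    have "s \<noteq> 0" using \<open>a \<noteq> b\<close> a0 b0 s_def by auto
    define T where "T = {t. 0 \<le> t \<and> t \<le> int k - 1 \<and> 0 \<le> t + s \<and> t + s \<le> int k - 1}"
    have "?S \<subseteq> (\<lambda>u. ((fst a - u * fst v0, snd a - u * snd v0), v0)) ` T"
    proof clarify
      fix p v assume v: "v \<in> kdirs" and q: "q \<subseteq> segment k p v"
      with qab obtain u1 u2 where u: "0 \<le> u1" "u1 \<le> int k - 1" "0 \<le> u2" "u2 \<le> int k - 1" and
        a: "a = (fst p + u1 * fst v, snd p + u1 * snd v)" and
        b: "b = (fst p + u2 * fst v, snd p + u2 * snd v)"
        unfolding segment_def by blast
      have "s * fst v0 = (u2 - u1) * fst v" "s * snd v0 = (u2 - u1) * snd v"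
        using a0 b0 a b by (simp_all add: s_def algebra_simps)
      with kdirs_parallel_eq[OF v0 v \<open>s \<noteq> 0\<close>] have "v = v0" "u2 - u1 = s" by auto
      with u a show "(p, v) \<in> (\<lambda>u. ((fst a - u * fst v0, snd a - u * snd v0), v0)) ` T"
        unfolding T_def by (intro image_eqI[of _ _ u1]) auto
    qed
    moreover have "finite T" unfolding T_def by (rule finite_subset[of _ "{0..int k - 1}"]) auto
    ultimately have "finite ?S" "card ?S \<le> card T"
      by (auto intro: finite_subset card_mono[THEN le_trans] card_image_le)
    moreover have "card T \<le> k - 1" unfolding T_def using \<open>s \<noteq> 0\<close> by (rule card_overlap_shift)
    ultimately show ?thesis by simp
  next
    case True
    show ?thesis unfolding True by simp
  qed
  then show "finite ?S" "card ?S \<le> k - 1" by auto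
qed

lemma card_le_mult_card_fibers:
  assumes "finite D" "finite Q" "g ` D \<subseteq> Q" "\<And>q. q \<in> Q \<Longrightarrow> card {x \<in> D. g x = q} \<le> m"
  shows "card D \<le> m * card Q"
proof -
  have "card D = card (\<Union>q\<in>Q. {x \<in> D. g x = q})"
    using assms(3) by (intro arg_cong[where f = card]) auto
  also have "\<dots> \<le> (\<Sum>q\<in>Q. card {x \<in> D. g x = q})"
    using assms(2) by (rule card_UN_le)
  also have "\<dots> \<le> (\<Sum>q\<in>Q. m)"
    using assms(4) by (rule sum_mono)
  also have "\<dots> = m * card Q" by simp
  finally show ?thesis .
qed

lemma card_disjoint_pairs_le:
  assumes "finite C" "\<And>p. p \<in> P \<Longrightarrow> card p = 2"
    and "\<And>p q. p \<in> P \<Longrightarrow> q \<in> P \<Longrightarrow> p \<noteq> q \<Longrightarrow> p \<inter> q = {}"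
  shows "2 * card {p \<in> P. p \<subseteq> C} \<le> card C"
proof -
  let ?P = "{p \<in> P. p \<subseteq> C}"
  have "finite ?P" by (rule finite_subset[of _ "Pow C"]) (use assms(1) in auto)
  then have "2 * card ?P = card (\<Union>?P)"
    using assms by (intro card_partition) (auto intro: finite_subset)
  also have "\<dots> \<le> card C" using assms(1) by (intro card_mono) auto
  finally show ?thesis .
qed

lemma pairing_strategy_density_bound:
  assumes "winning_pairing_strategy UNIV (k_in_a_row_edges k) P"
  shows "8 * N\<^sup>2 \<le> (k - 1) * (N + 2 * k)\<^sup>2"
proof -
  have P2: "\<And>p. p \<in> P \<Longrightarrow> card p = 2"
    and Pdisj: "\<And>p q. p \<in> P \<Longrightarrow> q \<in> P \<Longrightarrow> p \<noteq> q \<Longrightarrow> p \<inter> q = {}"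
    and Pcov: "\<And>e. e \<in> k_in_a_row_edges k \<Longrightarrow> \<exists>p\<in>P. p \<subseteq> e"
    using assms unfolding winning_pairing_strategy_def by auto
  define D where "D = ({0..<int N} \<times> {0..<int N}) \<times> kdirs"
  define C where "C = {- int k..<int N + int k} \<times> {- int k..<int N + int k}"
  define PC where "PC = {q \<in> P. q \<subseteq> C}"
  have "\<forall>x\<in>D. \<exists>q\<in>P. q \<subseteq> segment k (fst x) (snd x)"
    using Pcov segment_in_k_in_a_row_edges unfolding D_def by auto
  then obtain g where g: "\<And>x. x \<in> D \<Longrightarrow> g x \<in> P \<and> g x \<subseteq> segment k (fst x) (snd x)"
    by metis
  have "g ` D \<subseteq> PC"
  proof clarify
    fix p v assume "(p, v) \<in> D"
    with segment_subset_square[of v k p] g[of "(p, v)"]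
    show "g (p, v) \<in> PC" unfolding D_def C_def PC_def by fastforce
  qed
  moreover have "card {x \<in> D. g x = q} \<le> k - 1" if "q \<in> PC" for q
  proof -
    have "{x \<in> D. g x = q} \<subseteq> {(p, v). v \<in> kdirs \<and> q \<subseteq> segment k p v}"
      using g unfolding D_def by force
    moreover have "card q = 2" using that P2 unfolding PC_def by blast
    ultimately show ?thesis
      using segments_through_pair[of q k] by (meson card_mono le_trans)
  qed
  moreover have "finite PC" unfolding PC_def
    by (rule finite_subset[of _ "Pow C"]) (auto simp: C_def)
  ultimately have "card D \<le> (k - 1) * card PC"
    by (intro card_le_mult_card_fibers) (auto simp: D_def finite_kdirs)
  moreover have "card {- int k..<int N + int k} = N + 2 * k" by simp
  then have "card C = (N + 2 * k)\<^sup>2"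
    unfolding C_def by (simp add: card_cartesian_product power2_eq_square)
  then have "2 * card PC \<le> (N + 2 * k)\<^sup>2"
    using card_disjoint_pairs_le[of C P] P2 Pdisj unfolding PC_def C_def by simp
  moreover have "card D = 4 * N\<^sup>2"
    by (simp add: D_def card_cartesian_product card_kdirs power2_eq_square)
  ultimately have "8 * N\<^sup>2 \<le> (k - 1) * (2 * card PC)" by (simp add: mult.commute)
  also have "\<dots> \<le> (k - 1) * (N + 2 * k)\<^sup>2"
    using \<open>2 * card PC \<le> (N + 2 * k)\<^sup>2\<close> by (rule mult_le_mono2)
  finally show ?thesis .
qed

theorem mainTheorem5:
  fixes k :: nat
  assumes "k \<ge> 2"
    and "breaker_has_pairing_strategy (UNIV :: (int \<times> int) set) (k_in_a_row_edges k)"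
  shows "k \<ge> 9"
proof (rule ccontr)
  assume "\<not> k \<ge> 9"
  then have "(k - 1) * (300 + 2 * k)\<^sup>2 \<le> 7 * (316::nat)\<^sup>2"
    by (intro mult_mono power_mono) auto
  moreover from assms(2) have "8 * 300\<^sup>2 \<le> (k - 1) * (300 + 2 * k)\<^sup>2"
    unfolding breaker_has_pairing_strategy_def using pairing_strategy_density_bound by blast
  ultimately show False by simp
qed

end
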